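(* Let $\{X_n;n\ge1\}$ and $\{Y_n;n\ge1\}$ be two sequences of independent non-negative continuous random variables, where $Y_n$ has distribution function $F_n$ with $\overline F_n(t)>0$ for all $t\ge0$. Let $\{T'_n\}$ (counting process $N'$) be the failure times of the replacement-by-a-new-unit process based on $\{X_n\}$, and $\{T_n\}$ (counting process $N$) the failure times of the relevation process based on $\{F_n\}$. If (a) $X_1\ge_{\mathrm{st}}Y_1$, and (b) $X_n\ge_{\mathrm{st}}[Y_n-t\mid Y_n>t]$ for all $n\ge2$ and all $t>0$, then $(T'_1,\ldots,T'_n)\ge_{\mathrm{st}}(T_1,\ldots,T_n)$ for all $n\ge1$ and $N'(t)\le_{\mathrm{st}}N(t)$ for all $t\ge0$. Likewise, if (a) and (b) hold with $\le_{\mathrm{st}}$ in place of $\ge_{\mathrm{st}}$, then $(T'_1,\ldots,T'_n)\le_{\mathrm{st}}(T_1,\ldots,T_n)$ for all $n\ge 1$ and $N'(t)\ge_{\mathrm{st}}N(t)$ for all $t\ge0$.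
   Context: Relevation process based on $\{F_n\}$: random times $0<T_1<T_2<\cdots$ with $T_1\sim F_1$ and, for $i\ge2$, conditionally on $T_1=t_1,\ldots,T_{i-1}=t_{i-1}$ ($0<t_1<\cdots<t_{i-1}$), $P(T_i>t\mid\cdot)=\overline F_i(t)/\overline F_i(t_{i-1})$ for $t\ge t_{i-1}$; $N(t)=\sup\{n:T_n\le t\}$. Replacement-by-a-new-unit process: $T'_n=X_1+\cdots+X_n$, $N'(t)=\sup\{n:T'_n\le t\}$. $X\le_{\mathrm{st}}Y$ for random variables means $P(X>t)\le P(Y>t)$ for all $t$; for random vectors it means $E[\phi(\mathbf X)]\le E[\phi(\mathbf Y)]$ for all componentwise increasing $\phi$ for which the expectations exist. *)

theory Defs
  imports "HOL-Probability.Probability"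
begin

definition surv :: "'a measure \<Rightarrow> ('a \<Rightarrow> real) \<Rightarrow> real \<Rightarrow> real" where
  "surv M Z t = measure M {\<omega> \<in> space M. Z \<omega> > t}"

definition continuous_rv :: "'a measure \<Rightarrow> ('a \<Rightarrow> real) \<Rightarrow> bool" where
  "continuous_rv M Z \<longleftrightarrow> continuous_on UNIV (\<lambda>t. measure M {\<omega> \<in> space M. Z \<omega> \<le> t})"

definition st_le :: "'a measure \<Rightarrow> ('a \<Rightarrow> 'c::linorder) \<Rightarrow> 'b measure \<Rightarrow> ('b \<Rightarrow> 'c) \<Rightarrow> bool" where
  "st_le M Z M' W \<longleftrightarrow>
     (\<forall>s. measure M {\<omega> \<in> space M. s < Z \<omega>} \<le> measure M' {\<omega> \<in> space M'. s < W \<omega>})"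

definition vec :: "nat \<Rightarrow> (nat \<Rightarrow> 'a \<Rightarrow> real) \<Rightarrow> 'a \<Rightarrow> (nat \<Rightarrow> real)" where
  "vec n V \<omega> = restrict (\<lambda>i. V i \<omega>) {1..n}"

definition st_le_vec :: "nat \<Rightarrow> 'a measure \<Rightarrow> (nat \<Rightarrow> 'a \<Rightarrow> real) \<Rightarrow> 'b measure \<Rightarrow> (nat \<Rightarrow> 'b \<Rightarrow> real) \<Rightarrow> bool" where
  "st_le_vec n M V M' W \<longleftrightarrow>
     (\<forall>\<phi> :: (nat \<Rightarrow> real) \<Rightarrow> real.
        \<phi> \<in> borel_measurable (PiM {1..n} (\<lambda>_. borel)) \<longrightarrow>
        (\<forall>x \<in> space (PiM {1..n} (\<lambda>_. borel)). \<forall>y \<in> space (PiM {1..n} (\<lambda>_. borel)).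
            (\<forall>i\<in>{1..n}. x i \<le> y i) \<longrightarrow> \<phi> x \<le> \<phi> y) \<longrightarrow>
        integrable M (\<lambda>\<omega>. \<phi> (vec n V \<omega>)) \<longrightarrow>
        integrable M' (\<lambda>\<omega>. \<phi> (vec n W \<omega>)) \<longrightarrow>
        (\<integral>\<omega>. \<phi> (vec n V \<omega>) \<partial>M) \<le> (\<integral>\<omega>. \<phi> (vec n W \<omega>) \<partial>M'))"

definition replacement_times :: "(nat \<Rightarrow> 'a \<Rightarrow> real) \<Rightarrow> nat \<Rightarrow> 'a \<Rightarrow> real" where
  "replacement_times X n \<omega> = (\<Sum>i\<in>{1..n}. X i \<omega>)"

text \<open>Counting process N(t) = sup {n : T_n \<le> t} (0 if no such n), valued in enat.\<close>
definition counting :: "(nat \<Rightarrow> 'a \<Rightarrow> real) \<Rightarrow> real \<Rightarrow> 'a \<Rightarrow> enat" where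
  "counting T t \<omega> = (SUP n \<in> {n::nat. 1 \<le> n \<and> T n \<omega> \<le> t}. enat n)"

text \<open>T is (a version of) the relevation process based on the survival functions Fbar:
  0 < T 1 < T 2 < ..., T_1 has survival function Fbar 1, and for i \<ge> 2
  P(T_i > t | T_1,...,T_{i-1}) = Fbar_i(t)/Fbar_i(T_{i-1}) for t \<ge> T_{i-1} (and = 1 for t < T_{i-1}),
  the conditional probability being expressed by its defining integral identity.\<close>
definition relevation_process :: "'b measure \<Rightarrow> (nat \<Rightarrow> 'b \<Rightarrow> real) \<Rightarrow> (nat \<Rightarrow> real \<Rightarrow> real) \<Rightarrow> bool" where
  "relevation_process M' T Fbar \<longleftrightarrow>
     (\<forall>i\<ge>1. T i \<in> borel_measurable M') \<and>
     (\<forall>\<omega>\<in>space M'. 0 < T 1 \<omega> \<and> (\<forall>i\<ge>1. T i \<omega> < T (Suc i) \<omega>)) \<and>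
     (\<forall>t. measure M' {\<omega> \<in> space M'. T 1 \<omega> > t} = Fbar 1 t) \<and>
     (\<forall>i\<ge>2. \<forall>t. \<forall>A \<in> sets (PiM {1..i-1} (\<lambda>_. borel)).
        measure M' {\<omega> \<in> space M'. T i \<omega> > t \<and> vec (i-1) T \<omega> \<in> A} =
        (\<integral>\<omega>. indicator {\<omega> \<in> space M'. vec (i-1) T \<omega> \<in> A} \<omega> *
               (if T (i-1) \<omega> \<le> t then Fbar i t / Fbar i (T (i-1) \<omega>) else 1) \<partial>M'))"

end

theory Submission
  imports Defs
begin

text \<open>
  Both processes are generated by one-step transitions: given the first \<open>n\<close> failure times \<open>x\<close>,
  the next one is \<open>x\<^sub>n + X\<^sub>n\<^sub>+\<^sub>1\<close> for replacement and \<open>Y\<^sub>n\<^sub>+\<^sub>1\<close> conditioned on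
  \<open>Y\<^sub>n\<^sub>+\<^sub>1 > x\<^sub>n\<close> for relevation, i.e. \<open>x\<^sub>n\<close> plus the residual life
  \<open>[Y\<^sub>n\<^sub>+\<^sub>1 - x\<^sub>n | Y\<^sub>n\<^sub>+\<^sub>1 > x\<^sub>n]\<close>. Hypothesis (b) compares the two transitions
  at every \<open>x\<close> with \<open>x\<^sub>n > 0\<close>, and the replacement transition is monotone in \<open>x\<close>, so
  conditioning on the first \<open>n\<close> times propagates the comparison of the vectors from \<open>n\<close> to
  \<open>n + 1\<close>. Expectations of nonnegative monotone functions are compared first: in one
  dimension \<open>E f(Z) = \<integral>\<^sub>0\<^sup>\<infinity> P(f(Z) > t) dt\<close> reduces them to tail probabilities, and
  truncation extends the result to integrable test functions. Since \<open>N(t) \<ge> k\<close> iff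
  \<open>T\<^sub>k \<le> t\<close>, comparing the last coordinates yields the order of the counting processes.
\<close>

section \<open>Monotone expectations under the usual stochastic order\<close>

lemma upset_real_cases:
  fixes U :: "real set"
  assumes up: "\<And>x y. x \<in> U \<Longrightarrow> x \<le> y \<Longrightarrow> y \<in> U"
  obtains "U = {}" | "U = UNIV" | r where "U = {r..}" | r where "U = {r<..}"
proof -
  consider "U = {}" | "U = UNIV" | "U \<noteq> {}" "U \<noteq> UNIV" by blast
  then show thesis
  proof cases
    case 3
    then obtain z where "z \<notin> U" by blast
    then have bdd: "bdd_below U"
      using up by (meson bdd_belowI nle_le)
    have "{Inf U<..} \<subseteq> U"
    proof
      fix x assume "x \<in> {Inf U<..}"
      then obtain y where "y \<in> U" "y < x"
        using cInf_less_iff[OF \<open>U \<noteq> {}\<close> bdd] by auto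
      then show "x \<in> U" using up by auto
    qed
    moreover have "U \<subseteq> {Inf U..}"
      using bdd by (auto intro: cInf_lower)
    ultimately have "U = {Inf U..} \<or> U = {Inf U<..}"
      by (cases "Inf U \<in> U") (auto simp: less_eq_real_def)
    then show thesis using that by blast
  qed (use that in auto)
qed

lemma real_distribution_measure_Ici_le:
  assumes "real_distribution \<mu>" "real_distribution \<nu>"
    and le: "\<And>s. measure \<mu> {s<..} \<le> measure \<nu> {s<..}"
  shows "measure \<mu> {s..} \<le> measure \<nu> {s..}"
proof -
  interpret \<mu>: real_distribution \<mu> by fact
  interpret \<nu>: real_distribution \<nu> by fact
  have "cdf \<nu> x \<le> cdf \<mu> x" for x
    using le[of x] \<mu>.prob_compl[of "{..x}"] \<nu>.prob_compl[of "{..x}"]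
    by (simp add: cdf_def2 Compl_eq_Diff_UNIV[symmetric])
  then have "measure \<nu> {..<s} \<le> measure \<mu> {..<s}"
    by (intro tendsto_le[OF _ \<mu>.cdf_at_left \<nu>.cdf_at_left]) auto
  then show ?thesis
    using \<mu>.prob_compl[of "{..<s}"] \<nu>.prob_compl[of "{..<s}"]
    by (simp add: Compl_eq_Diff_UNIV[symmetric])
qed

lemma real_distribution_emeasure_upset_le:
  assumes \<mu>: "real_distribution \<mu>" and \<nu>: "real_distribution \<nu>"
    and le: "\<And>s. measure \<mu> {s<..} \<le> measure \<nu> {s<..}"
    and up: "\<And>x y. x \<in> U \<Longrightarrow> x \<le> y \<Longrightarrow> y \<in> U"
  shows "emeasure \<mu> U \<le> emeasure \<nu> U"
proof -
  interpret \<mu>: real_distribution \<mu> by fact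
  interpret \<nu>: real_distribution \<nu> by fact
  show ?thesis
  proof (rule upset_real_cases[OF up])
    show "U = UNIV \<Longrightarrow> ?thesis"
      using \<mu>.emeasure_space_1 \<nu>.emeasure_space_1 by simp
  qed (use le real_distribution_measure_Ici_le[OF \<mu> \<nu> le] in
      \<open>simp_all add: \<mu>.emeasure_eq_measure \<nu>.emeasure_eq_measure\<close>)
qed

lemma set_nn_integral_Ioi_indicator_less:
  fixes v :: ennreal
  shows "(\<integral>\<^sup>+t\<in>{0<..}. indicator {t. ennreal t < v} t \<partial>lborel) = v"
proof (cases v rule: ennreal_cases)
  case (real r)
  then have "{t. ennreal t < v} \<inter> {0<..} = {0<..<r}"
    by (auto simp: ennreal_less_iff)
  then show ?thesis
    using real by (simp flip: indicator_inter_arith)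
next
  case top
  have "emeasure lborel {0::real<..} = \<infinity>"
  proof (rule ccontr)
    assume "emeasure lborel {0::real<..} \<noteq> \<infinity>"
    then obtain c where c: "emeasure lborel {0::real<..} = ennreal c" "0 \<le> c"
      by (cases "emeasure lborel {0::real<..}" rule: ennreal_cases) auto
    have "emeasure lborel {0<..<c + 1} \<le> emeasure lborel {0::real<..}"
      by (rule emeasure_mono) auto
    with c show False by (simp add: ennreal_le_iff)
  qed
  then show ?thesis using top by simp
qed

lemma nn_integral_layer_cake:
  assumes "sigma_finite_measure M" and g: "g \<in> borel_measurable M"
  shows "(\<integral>\<^sup>+x. g x \<partial>M) = (\<integral>\<^sup>+t\<in>{0<..}. emeasure M {x \<in> space M. ennreal t < g x} \<partial>lborel)"
proof -
  interpret pair_sigma_finite M lborel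
    using assms(1) by (simp add: pair_sigma_finite_def lborel.sigma_finite_measure_axioms)
  have "(\<integral>\<^sup>+x. g x \<partial>M) = (\<integral>\<^sup>+x. \<integral>\<^sup>+t. indicator {t. ennreal t < g x} t * indicator {0<..} t \<partial>lborel \<partial>M)"
    by (simp add: set_nn_integral_Ioi_indicator_less)
  also have "\<dots> = (\<integral>\<^sup>+t. \<integral>\<^sup>+x. indicator {t. ennreal t < g x} t * indicator {0<..} t \<partial>M \<partial>lborel)"
    by (rule Fubini'[symmetric]) (use g in measurable)
  also have "\<dots> = (\<integral>\<^sup>+t\<in>{0<..}. emeasure M {x \<in> space M. ennreal t < g x} \<partial>lborel)"
  proof (intro nn_integral_cong)
    fix t :: real
    have "(\<integral>\<^sup>+x. indicator {t. ennreal t < g x} t \<partial>M) = emeasure M {x \<in> space M. ennreal t < g x}"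
    proof -
      have "(\<integral>\<^sup>+x. indicator {t. ennreal t < g x} t \<partial>M) = (\<integral>\<^sup>+x. indicator {x \<in> space M. ennreal t < g x} x \<partial>M)"
        by (intro nn_integral_cong) (simp add: indicator_def)
      also have "\<dots> = emeasure M {x \<in> space M. ennreal t < g x}"
        using g by (intro nn_integral_indicator) measurable
      finally show ?thesis .
    qed
    then show "(\<integral>\<^sup>+x. indicator {t. ennreal t < g x} t * indicator {0<..} t \<partial>M) =
        emeasure M {x \<in> space M. ennreal t < g x} * indicator {0<..} t"
      by (cases "0 < t") simp_all
  qed
  finally show ?thesis .
qed

lemma nn_integral_mono_st_le:
  fixes Z :: "'a \<Rightarrow> real" and W :: "'b \<Rightarrow> real" and g :: "real \<Rightarrow> ennreal"
  assumes "prob_space A" "prob_space B"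
    and Z: "Z \<in> borel_measurable A" and W: "W \<in> borel_measurable B"
    and le: "st_le A Z B W" and g: "g \<in> borel_measurable borel" and "mono g"
  shows "(\<integral>\<^sup>+\<omega>. g (Z \<omega>) \<partial>A) \<le> (\<integral>\<^sup>+\<omega>. g (W \<omega>) \<partial>B)"
proof -
  interpret A: prob_space A by fact
  interpret B: prob_space B by fact
  let ?\<mu> = "distr A borel Z" and ?\<nu> = "distr B borel W"
  have \<mu>: "real_distribution ?\<mu>" and \<nu>: "real_distribution ?\<nu>"
    using Z W by simp_all
  have tail: "measure ?\<mu> {s<..} \<le> measure ?\<nu> {s<..}" for s
    using le Z W by (simp add: st_le_def measure_distr vimage_def Int_def conj_commute)
  have up: "x \<in> {x. ennreal t < g x} \<Longrightarrow> x \<le> y \<Longrightarrow> y \<in> {x. ennreal t < g x}" for t x y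
    using \<open>mono g\<close> by (auto dest: monoD intro: order.strict_trans2)
  have "(\<integral>\<^sup>+\<omega>. g (Z \<omega>) \<partial>A) = (\<integral>\<^sup>+t\<in>{0<..}. emeasure ?\<mu> {x. ennreal t < g x} \<partial>lborel)"
    using Z g nn_integral_layer_cake[of ?\<mu> g] real_distribution.finite_borel_measure_M[OF \<mu>]
    by (simp add: nn_integral_distr finite_borel_measure_def finite_measure_def)
  also have "\<dots> \<le> (\<integral>\<^sup>+t\<in>{0<..}. emeasure ?\<nu> {x. ennreal t < g x} \<partial>lborel)"
    by (intro nn_integral_mono mult_right_mono real_distribution_emeasure_upset_le[OF \<mu> \<nu> tail up]) auto
  also have "\<dots> = (\<integral>\<^sup>+\<omega>. g (W \<omega>) \<partial>B)"
    using W g nn_integral_layer_cake[of ?\<nu> g] real_distribution.finite_borel_measure_M[OF \<nu>]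
    by (simp add: nn_integral_distr finite_borel_measure_def finite_measure_def)
  finally show ?thesis .
qed

abbreviation Pi_borel :: "nat \<Rightarrow> (nat \<Rightarrow> real) measure" where
  "Pi_borel n \<equiv> PiM {1..n} (\<lambda>_. borel)"

definition coord_mono :: "nat \<Rightarrow> ((nat \<Rightarrow> real) \<Rightarrow> 'c::order) \<Rightarrow> bool" where
  "coord_mono n f \<longleftrightarrow>
     (\<forall>x\<in>space (Pi_borel n). \<forall>y\<in>space (Pi_borel n). (\<forall>i\<in>{1..n}. x i \<le> y i) \<longrightarrow> f x \<le> f y)"

definition st_le_vec_nn ::
    "nat \<Rightarrow> 'a measure \<Rightarrow> (nat \<Rightarrow> 'a \<Rightarrow> real) \<Rightarrow> 'b measure \<Rightarrow> (nat \<Rightarrow> 'b \<Rightarrow> real) \<Rightarrow> bool" where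
  "st_le_vec_nn n A V B W \<longleftrightarrow>
     (\<forall>f :: (nat \<Rightarrow> real) \<Rightarrow> ennreal. f \<in> borel_measurable (Pi_borel n) \<longrightarrow> coord_mono n f \<longrightarrow>
        (\<integral>\<^sup>+\<omega>. f (vec n V \<omega>) \<partial>A) \<le> (\<integral>\<^sup>+\<omega>. f (vec n W \<omega>) \<partial>B))"

lemma st_le_vec_nnD:
  "st_le_vec_nn n A V B W \<Longrightarrow> f \<in> borel_measurable (Pi_borel n) \<Longrightarrow> coord_mono n f \<Longrightarrow>
    (\<integral>\<^sup>+\<omega>. f (vec n V \<omega>) \<partial>A) \<le> (\<integral>\<^sup>+\<omega>. f (vec n W \<omega>) \<partial>B)"
  unfolding st_le_vec_nn_def by blast

lemma vec_apply: "i \<in> {1..n} \<Longrightarrow> vec n V \<omega> i = V i \<omega>"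
  by (simp add: vec_def)

lemma vec_space: "vec n V \<omega> \<in> space (Pi_borel n)"
  by (simp add: vec_def space_PiM)

lemma measurable_vec:
  "(\<And>i. i \<in> {1..n} \<Longrightarrow> V i \<in> borel_measurable M) \<Longrightarrow> vec n V \<in> measurable M (Pi_borel n)"
  unfolding vec_def by (rule measurable_restrict)

lemma measurable_component_Pi_borel: "(\<lambda>x. x i) \<in> borel_measurable (Pi_borel n)"
proof (cases "i \<in> {1..n}")
  case False
  then have "x i = undefined" if "x \<in> space (Pi_borel n)" for x
    using that by (auto simp: space_PiM PiE_def extensional_def)
  then show ?thesis
    by (subst measurable_cong[where g = "\<lambda>_. undefined"]) auto
qed (rule measurable_component_singleton)

lemma tendsto_integral_max_neg:
  fixes g :: "'a \<Rightarrow> real"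
  assumes g: "integrable M g"
  shows "(\<lambda>c::nat. \<integral>\<omega>. max (g \<omega>) (- real c) \<partial>M) \<longlonglongrightarrow> (\<integral>\<omega>. g \<omega> \<partial>M)"
proof (rule integral_dominated_convergence[where w = "\<lambda>\<omega>. \<bar>g \<omega>\<bar>"])
  show "AE \<omega> in M. (\<lambda>c. max (g \<omega>) (- real c)) \<longlonglongrightarrow> g \<omega>"
  proof (rule AE_I2)
    fix \<omega>
    obtain N :: nat where "- g \<omega> \<le> real N" using real_arch_simple by blast
    then have "\<forall>\<^sub>F c in sequentially. max (g \<omega>) (- real c) = g \<omega>"
      by (auto intro!: eventually_sequentiallyI[of N])
    then show "(\<lambda>c. max (g \<omega>) (- real c)) \<longlonglongrightarrow> g \<omega>" by (rule tendsto_eventually)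
  qed
qed (use g in \<open>auto intro: integrable_abs\<close>)

lemma st_le_vec_nn_imp_st_le_vec:
  assumes "prob_space A" "prob_space B" and le: "st_le_vec_nn n A V B W"
  shows "st_le_vec n A V B W"
  unfolding st_le_vec_def
proof (intro allI impI)
  interpret A: prob_space A by fact
  interpret B: prob_space B by fact
  fix \<phi> :: "(nat \<Rightarrow> real) \<Rightarrow> real"
  assume \<phi>: "\<phi> \<in> borel_measurable (Pi_borel n)"
    and mono: "\<forall>x\<in>space (Pi_borel n). \<forall>y\<in>space (Pi_borel n). (\<forall>i\<in>{1..n}. x i \<le> y i) \<longrightarrow> \<phi> x \<le> \<phi> y"
    and iA: "integrable A (\<lambda>\<omega>. \<phi> (vec n V \<omega>))" and iB: "integrable B (\<lambda>\<omega>. \<phi> (vec n W \<omega>))"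
  have "(\<integral>\<omega>. max (\<phi> (vec n V \<omega>)) (- real c) \<partial>A) \<le> (\<integral>\<omega>. max (\<phi> (vec n W \<omega>)) (- real c) \<partial>B)"
    for c :: nat
  proof -
    \<comment> \<open>shifted up by \<open>c\<close>, the truncation of \<open>\<phi>\<close> is a nonnegative monotone function\<close>
    define f where "f x = max (\<phi> x) (- real c) + real c" for x
    have "(\<integral>\<^sup>+\<omega>. ennreal (f (vec n V \<omega>)) \<partial>A) \<le> (\<integral>\<^sup>+\<omega>. ennreal (f (vec n W \<omega>)) \<partial>B)"
      using mono \<phi> by (intro st_le_vec_nnD[OF le]) (fastforce simp: coord_mono_def f_def le_max_iff_disj)+
    moreover have "integrable A (\<lambda>\<omega>. f (vec n V \<omega>))" "integrable B (\<lambda>\<omega>. f (vec n W \<omega>))"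
      using iA iB unfolding f_def by (auto intro: integrable_max)
    ultimately have "(\<integral>\<omega>. f (vec n V \<omega>) \<partial>A) \<le> (\<integral>\<omega>. f (vec n W \<omega>) \<partial>B)"
      by (simp add: nn_integral_eq_integral f_def integral_nonneg)
    then show ?thesis
      using iA iB unfolding f_def by (simp add: integrable_max A.prob_space B.prob_space)
  qed
  then show "(\<integral>\<omega>. \<phi> (vec n V \<omega>) \<partial>A) \<le> (\<integral>\<omega>. \<phi> (vec n W \<omega>) \<partial>B)"
    by (intro LIMSEQ_le[OF tendsto_integral_max_neg[OF iA] tendsto_integral_max_neg[OF iB]]) auto
qed

lemma st_le_vec_nn_imp_st_le:
  assumes "prob_space A" "prob_space B" and le: "st_le_vec_nn n A V B W" and k: "k \<in> {1..n}"
    and "V k \<in> borel_measurable A" "W k \<in> borel_measurable B"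
  shows "st_le A (V k) B (W k)"
  unfolding st_le_def
proof
  interpret A: prob_space A by fact
  interpret B: prob_space B by fact
  fix t
  let ?f = "\<lambda>x :: nat \<Rightarrow> real. indicator {t<..} (x k) :: ennreal"
  have "coord_mono n ?f"
    unfolding coord_mono_def using k by (auto simp: indicator_def intro: less_le_trans)
  moreover have "?f \<in> borel_measurable (Pi_borel n)"
    by (rule measurable_compose[OF measurable_component_Pi_borel]) simp
  ultimately have "(\<integral>\<^sup>+\<omega>. ?f (vec n V \<omega>) \<partial>A) \<le> (\<integral>\<^sup>+\<omega>. ?f (vec n W \<omega>) \<partial>B)"
    by (intro st_le_vec_nnD[OF le])
  also have "(\<integral>\<^sup>+\<omega>. ?f (vec n V \<omega>) \<partial>A) = (\<integral>\<^sup>+\<omega>. indicator {\<omega> \<in> space A. t < V k \<omega>} \<omega> \<partial>A)"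
    using k by (intro nn_integral_cong) (simp add: vec_def indicator_def)
  also have "(\<integral>\<^sup>+\<omega>. ?f (vec n W \<omega>) \<partial>B) = (\<integral>\<^sup>+\<omega>. indicator {\<omega> \<in> space B. t < W k \<omega>} \<omega> \<partial>B)"
    using k by (intro nn_integral_cong) (simp add: vec_def indicator_def)
  finally show "measure A {\<omega> \<in> space A. t < V k \<omega>} \<le> measure B {\<omega> \<in> space B. t < W k \<omega>}"
    using assms(5,6) by (simp add: A.emeasure_eq_measure B.emeasure_eq_measure)
qed

lemma vec_1: "vec 1 V \<omega> = (\<lambda>_\<in>{1}. V 1 \<omega>)"
  by (auto simp: vec_def fun_eq_iff)

lemma st_le_vec_nn_1:
  assumes "prob_space A" "prob_space B"
    and "V 1 \<in> borel_measurable A" "W 1 \<in> borel_measurable B" and "st_le A (V 1) B (W 1)"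
  shows "st_le_vec_nn 1 A V B W"
  unfolding st_le_vec_nn_def
proof (intro allI impI)
  fix f :: "(nat \<Rightarrow> real) \<Rightarrow> ennreal"
  assume f: "f \<in> borel_measurable (Pi_borel 1)" and mono: "coord_mono 1 f"
  define g where "g y = f (\<lambda>_\<in>{1}. y)" for y :: real
  have "(\<lambda>y::real. \<lambda>_\<in>{1::nat}. y) \<in> measurable borel (Pi_borel 1)"
    by (simp add: measurable_restrict)
  then have "g \<in> borel_measurable borel"
    unfolding g_def using f by measurable
  moreover have "mono g"
    using mono by (intro monoI) (auto simp: g_def coord_mono_def space_PiM)
  ultimately have "(\<integral>\<^sup>+\<omega>. g (V 1 \<omega>) \<partial>A) \<le> (\<integral>\<^sup>+\<omega>. g (W 1 \<omega>) \<partial>B)"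
    by (rule nn_integral_mono_st_le[OF assms])
  then show "(\<integral>\<^sup>+\<omega>. f (vec 1 V \<omega>) \<partial>A) \<le> (\<integral>\<^sup>+\<omega>. f (vec 1 W \<omega>) \<partial>B)"
    unfolding vec_1 g_def .
qed

lemma less_counting_iff:
  assumes mono: "\<And>i. 1 \<le> i \<Longrightarrow> S i \<omega> \<le> S (Suc i) \<omega>"
  shows "enat j < counting S t \<omega> \<longleftrightarrow> S (Suc j) \<omega> \<le> t"
proof
  assume "enat j < counting S t \<omega>"
  then obtain n where n: "1 \<le> n" "S n \<omega> \<le> t" "j < n"
    unfolding counting_def less_SUP_iff by auto
  have "S (Suc j) \<omega> \<le> S (Suc (n - 1)) \<omega>"
  proof (rule lift_Suc_mono_le[of "\<lambda>i. S (Suc i) \<omega>"])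
    show "S (Suc i) \<omega> \<le> S (Suc (Suc i)) \<omega>" for i by (rule mono) simp
  qed (use n(3) in linarith)
  with n show "S (Suc j) \<omega> \<le> t" by simp
next
  assume "S (Suc j) \<omega> \<le> t"
  then have "Suc j \<in> {n. 1 \<le> n \<and> S n \<omega> \<le> t}" by simp
  then have "enat (Suc j) \<le> counting S t \<omega>"
    unfolding counting_def by (rule SUP_upper)
  then show "enat j < counting S t \<omega>"
    by (simp add: Suc_ile_eq)
qed

lemma st_le_counting:
  assumes "prob_space A" "prob_space B"
    and V_mono: "\<And>\<omega> i. \<omega> \<in> space A \<Longrightarrow> 1 \<le> i \<Longrightarrow> V i \<omega> \<le> V (Suc i) \<omega>"
    and W_mono: "\<And>\<omega> i. \<omega> \<in> space B \<Longrightarrow> 1 \<le> i \<Longrightarrow> W i \<omega> \<le> W (Suc i) \<omega>"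
    and V: "\<And>i. 1 \<le> i \<Longrightarrow> V i \<in> borel_measurable A"
    and W: "\<And>i. 1 \<le> i \<Longrightarrow> W i \<in> borel_measurable B"
    and le: "\<And>k. 1 \<le> k \<Longrightarrow> st_le B (W k) A (V k)"
  shows "st_le A (counting V t) B (counting W t)"
  unfolding st_le_def
proof
  interpret A: prob_space A by fact
  interpret B: prob_space B by fact
  fix s :: enat
  show "measure A {\<omega> \<in> space A. s < counting V t \<omega>} \<le> measure B {\<omega> \<in> space B. s < counting W t \<omega>}"
  proof (cases s)
    case (enat j)
    have "{\<omega> \<in> space A. s < counting V t \<omega>} = space A - {\<omega> \<in> space A. t < V (Suc j) \<omega>}"
      using V_mono by (auto simp: enat less_counting_iff not_less)
    moreover have "{\<omega> \<in> space B. s < counting W t \<omega>} = space B - {\<omega> \<in> space B. t < W (Suc j) \<omega>}"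
      using W_mono by (auto simp: enat less_counting_iff not_less)
    moreover have "{\<omega> \<in> space A. t < V (Suc j) \<omega>} \<in> sets A" "{\<omega> \<in> space B. t < W (Suc j) \<omega>} \<in> sets B"
      using V[of "Suc j"] W[of "Suc j"] by measurable
    ultimately show ?thesis
      using le[of "Suc j"] by (simp add: A.prob_compl B.prob_compl st_le_def)
  qed simp
qed

section \<open>One-step kernels\<close>

definition vec_snoc :: "nat \<Rightarrow> (nat \<Rightarrow> real) \<Rightarrow> real \<Rightarrow> nat \<Rightarrow> real" where
  "vec_snoc n x y = (\<lambda>i\<in>{1..Suc n}. (x(Suc n := y)) i)"

lemma vec_Suc: "vec (Suc n) V \<omega> = vec_snoc n (vec n V \<omega>) (V (Suc n) \<omega>)"
  by (auto simp: vec_def vec_snoc_def fun_eq_iff)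

lemma measurable_vec_snoc:
  "(\<lambda>z. vec_snoc n (fst z) (snd z)) \<in> measurable (Pi_borel n \<Otimes>\<^sub>M borel) (Pi_borel (Suc n))"
  unfolding vec_snoc_def
proof (rule measurable_restrict)
  fix i
  have "(\<lambda>z. if i = Suc n then snd z else fst z i) \<in> borel_measurable (Pi_borel n \<Otimes>\<^sub>M borel)"
    using measurable_component_Pi_borel[of i n] by measurable
  then show "(\<lambda>z. ((fst z)(Suc n := snd z)) i) \<in> borel_measurable (Pi_borel n \<Otimes>\<^sub>M borel)"
    by simp
qed

lemma mono_vec_snoc:
  assumes "coord_mono (Suc n) f" and "x \<in> space (Pi_borel n)"
  shows "mono (\<lambda>y. f (vec_snoc n x y))"
  using assms by (intro monoI) (auto simp: coord_mono_def vec_snoc_def space_PiM)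

lemma measurable_vec_snoc_right:
  assumes "f \<in> borel_measurable (Pi_borel (Suc n))" and "x \<in> space (Pi_borel n)"
  shows "(\<lambda>y. f (vec_snoc n x y)) \<in> borel_measurable borel"
  using measurable_compose[OF measurable_compose[OF measurable_Pair1' measurable_vec_snoc] assms(1)]
    assms(2) by simp

definition replacement_kernel ::
    "'a measure \<Rightarrow> ('a \<Rightarrow> real) \<Rightarrow> nat \<Rightarrow> ((nat \<Rightarrow> real) \<Rightarrow> ennreal) \<Rightarrow> (nat \<Rightarrow> real) \<Rightarrow> ennreal" where
  "replacement_kernel M X n f x = (\<integral>\<^sup>+\<omega>. f (vec_snoc n x (x n + X \<omega>)) \<partial>M)"

definition relevation_kernel ::
    "'a measure \<Rightarrow> ('a \<Rightarrow> real) \<Rightarrow> nat \<Rightarrow> ((nat \<Rightarrow> real) \<Rightarrow> ennreal) \<Rightarrow> (nat \<Rightarrow> real) \<Rightarrow> ennreal" where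
  "relevation_kernel M Y n f x = (\<integral>\<^sup>+\<omega>. f (vec_snoc n x (Y \<omega>)) \<partial>uniform_measure M {\<omega> \<in> space M. x n < Y \<omega>})"

lemma measurable_replacement_kernel:
  assumes "sigma_finite_measure M" "X \<in> borel_measurable M" "f \<in> borel_measurable (Pi_borel (Suc n))"
  shows "replacement_kernel M X n f \<in> borel_measurable (Pi_borel n)"
proof -
  have "(\<lambda>z. (fst z, fst z n + X (snd z))) \<in> measurable (Pi_borel n \<Otimes>\<^sub>M M) (Pi_borel n \<Otimes>\<^sub>M borel)"
    using assms(2) measurable_component_Pi_borel[of n n] by measurable
  from measurable_compose[OF measurable_compose[OF this measurable_vec_snoc] assms(3)]
  have "(\<lambda>z. f (vec_snoc n (fst z) (fst z n + X (snd z)))) \<in> borel_measurable (Pi_borel n \<Otimes>\<^sub>M M)"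
    by simp
  from sigma_finite_measure.borel_measurable_nn_integral_fst[OF assms(1) this]
  show ?thesis
    unfolding replacement_kernel_def by simp
qed

lemma coord_mono_replacement_kernel:
  assumes "coord_mono (Suc n) f" "1 \<le> n"
  shows "coord_mono n (replacement_kernel M X n f)"
  unfolding coord_mono_def replacement_kernel_def
proof (intro ballI impI nn_integral_mono)
  fix x y \<omega> assume "x \<in> space (Pi_borel n)" "y \<in> space (Pi_borel n)" "\<forall>i\<in>{1..n}. x i \<le> y i"
  with assms show "f (vec_snoc n x (x n + X \<omega>)) \<le> f (vec_snoc n y (y n + X \<omega>))"
    by (auto simp: coord_mono_def vec_snoc_def space_PiM)
qed

lemma replacement_times_Suc:
  "replacement_times X (Suc n) \<omega> = replacement_times X n \<omega> + X (Suc n) \<omega>"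
  by (simp add: replacement_times_def)

lemma (in prob_space) nn_integral_indep_var:
  assumes ind: "indep_var N1 Z N2 W" and g: "g \<in> borel_measurable (N1 \<Otimes>\<^sub>M N2)"
  shows "(\<integral>\<^sup>+\<omega>. g (Z \<omega>, W \<omega>) \<partial>M) = (\<integral>\<^sup>+\<omega>. \<integral>\<^sup>+\<omega>'. g (Z \<omega>, W \<omega>') \<partial>M \<partial>M)"
proof -
  have Z: "random_variable N1 Z" and W: "random_variable N2 W"
    using indep_var_rv1[OF ind] indep_var_rv2[OF ind] .
  interpret W: prob_space "distr M N2 W"
    by (rule prob_space_distr[OF W])
  have g': "g \<in> borel_measurable (distr M N1 Z \<Otimes>\<^sub>M distr M N2 W)"
    using g by (simp cong: measurable_cong_sets)
  have "(\<integral>\<^sup>+\<omega>. g (Z \<omega>, W \<omega>) \<partial>M) = integral\<^sup>N (distr M (N1 \<Otimes>\<^sub>M N2) (\<lambda>\<omega>. (Z \<omega>, W \<omega>))) g"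
    using Z W g by (simp add: nn_integral_distr)
  also have "\<dots> = integral\<^sup>N (distr M N1 Z \<Otimes>\<^sub>M distr M N2 W) g"
    using ind by (simp add: indep_var_distribution_eq)
  also have "\<dots> = (\<integral>\<^sup>+x. \<integral>\<^sup>+y. g (x, y) \<partial>distr M N2 W \<partial>distr M N1 Z)"
    by (rule W.nn_integral_fst[symmetric, OF g'])
  also have "\<dots> = (\<integral>\<^sup>+\<omega>. \<integral>\<^sup>+y. g (Z \<omega>, y) \<partial>distr M N2 W \<partial>M)"
    using Z W.borel_measurable_nn_integral_fst[OF g'] by (simp add: nn_integral_distr)
  also have "\<dots> = (\<integral>\<^sup>+\<omega>. \<integral>\<^sup>+\<omega>'. g (Z \<omega>, W \<omega>') \<partial>M \<partial>M)"
  proof (intro nn_integral_cong)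
    fix \<omega> assume "\<omega> \<in> space M"
    then have "(\<lambda>y. g (Z \<omega>, y)) \<in> borel_measurable N2"
      using Z g by (auto intro: measurable_Pair2)
    then show "(\<integral>\<^sup>+y. g (Z \<omega>, y) \<partial>distr M N2 W) = (\<integral>\<^sup>+\<omega>'. g (Z \<omega>, W \<omega>') \<partial>M)"
      using W by (simp add: nn_integral_distr)
  qed
  finally show ?thesis .
qed

lemma nn_integral_replacement_times_Suc:
  assumes "prob_space M" and ind: "prob_space.indep_vars M (\<lambda>_. borel) X {1..}"
    and f: "f \<in> borel_measurable (Pi_borel (Suc n))" and n: "1 \<le> n"
  shows "(\<integral>\<^sup>+\<omega>. f (vec (Suc n) (replacement_times X) \<omega>) \<partial>M) =
    (\<integral>\<^sup>+\<omega>. replacement_kernel M (X (Suc n)) n f (vec n (replacement_times X) \<omega>) \<partial>M)"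
proof -
  define psums where "psums x = (\<lambda>i\<in>{1..n}. \<Sum>j\<in>{1..i}. x j)" for x :: "nat \<Rightarrow> real"
  have vec_S: "vec n (replacement_times X) \<omega> = psums (vec n X \<omega>)" for \<omega>
    by (auto simp: psums_def vec_def replacement_times_def fun_eq_iff)
  have S_Suc: "replacement_times X (Suc n) \<omega> = psums (vec n X \<omega>) n + X (Suc n) \<omega>" for \<omega>
    using n by (simp add: psums_def vec_def replacement_times_def)
  \<comment> \<open>\<open>indep_var\<close> needs both variables in the same space, so \<open>X (Suc n)\<close> enters as a
    vector indexed by \<open>{Suc n}\<close>\<close>
  have indep: "prob_space.indep_var M (Pi_borel n) (vec n X) (PiM {Suc n} (\<lambda>_. borel)) (\<lambda>\<omega>. \<lambda>i\<in>{Suc n}. X i \<omega>)"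
    unfolding vec_def[abs_def] by (rule prob_space.indep_var_restrict[OF assms(1) ind]) auto
  have "psums \<in> measurable (Pi_borel n) (Pi_borel n)"
    unfolding psums_def by (intro measurable_restrict borel_measurable_sum measurable_component_Pi_borel)
  then have "(\<lambda>z. (psums (fst z), psums (fst z) n + snd z (Suc n)))
      \<in> measurable (Pi_borel n \<Otimes>\<^sub>M PiM {Suc n} (\<lambda>_. borel)) (Pi_borel n \<Otimes>\<^sub>M borel)"
    using measurable_component_Pi_borel[of n n] by measurable
  from measurable_compose[OF measurable_compose[OF this measurable_vec_snoc] f]
  have "(\<lambda>z. f (vec_snoc n (psums (fst z)) (psums (fst z) n + snd z (Suc n))))
      \<in> borel_measurable (Pi_borel n \<Otimes>\<^sub>M PiM {Suc n} (\<lambda>_. borel))"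
    by simp
  from prob_space.nn_integral_indep_var[OF assms(1) indep this]
  show ?thesis
    by (simp add: vec_Suc vec_S S_Suc replacement_kernel_def)
qed

section \<open>The relevation process\<close>

lemma UN_Ioi_minus_nat: "(\<Union>k::nat. {- real k<..}) = UNIV"
  using UN_Ioc_eq_UNIV by fastforce

lemma sets_pair_borel_Ioi:
  "sets (N \<Otimes>\<^sub>M (borel :: real measure)) = sigma_sets (space N \<times> UNIV) {a \<times> {t<..} | a (t :: real). a \<in> sets N}"
proof -
  have gen: "{a \<times> b | a b. a \<in> sets N \<and> b \<in> range greaterThan} = {a \<times> {t<..} | a (t :: real). a \<in> sets N}"
    by auto
  have "sets (N \<Otimes>\<^sub>M (borel :: real measure)) =
      sets (sigma (space N \<times> space borel) {a \<times> b | a b. a \<in> sets N \<and> b \<in> range greaterThan})"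
  proof (rule sets_pair_eq[where Ea = "sets N" and Eb = "range greaterThan"
        and Ca = "{space N}" and Cb = "range (\<lambda>k::nat. {- real k<..})"])
    show "sets (borel :: real measure) = sigma_sets (space borel) (range greaterThan)"
      by (subst borel_Ioi) simp
    show "\<Union> (range (\<lambda>k::nat. {- real k<..})) = space (borel :: real measure)"
      by (simp add: UN_Ioi_minus_nat)
  qed (auto simp: sets.sigma_sets_eq dest: sets.sets_into_space)
  also have "\<dots> = sigma_sets (space N \<times> UNIV) {a \<times> {t<..} | a (t :: real). a \<in> sets N}"
    unfolding gen using sets.sets_into_space by (subst sets_measure_of) fastforce+
  finally show ?thesis .
qed

lemma measure_eqI_pair_borel_Ioi:
  fixes \<mu> \<nu> :: "('a \<times> real) measure"
  assumes sets: "sets \<mu> = sets (N \<Otimes>\<^sub>M borel)" "sets \<nu> = sets (N \<Otimes>\<^sub>M borel)"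
    and "finite_measure \<mu>"
    and eq: "\<And>a t. a \<in> sets N \<Longrightarrow> emeasure \<mu> (a \<times> {t<..}) = emeasure \<nu> (a \<times> {t<..})"
  shows "\<mu> = \<nu>"
proof (rule measure_eqI_generator_eq[where \<Omega> = "space N \<times> UNIV"
      and A = "\<lambda>k::nat. space N \<times> {- real k<..}"])
  show "Int_stable {a \<times> {t<..} | a (t :: real). a \<in> sets N}"
  proof (rule Int_stableI)
    fix X Y assume "X \<in> {a \<times> {t<..} | a (t :: real). a \<in> sets N}" "Y \<in> {a \<times> {t<..} | a (t :: real). a \<in> sets N}"
    then obtain a b and s t :: real where "X = a \<times> {s<..}" "Y = b \<times> {t<..}" "a \<in> sets N" "b \<in> sets N"
      by blast
    then show "X \<inter> Y \<in> {a \<times> {t<..} | a (t :: real). a \<in> sets N}"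
      by (intro CollectI exI[of _ "a \<inter> b"] exI[of _ "max s t"]) auto
  qed
  show "(\<Union>k. space N \<times> {- real k<..}) = space N \<times> UNIV"
    using UN_Ioi_minus_nat by blast
  show "emeasure \<mu> (space N \<times> {- real k<..}) \<noteq> \<infinity>" for k
    using \<open>finite_measure \<mu>\<close> by (simp add: finite_measure.emeasure_finite)
qed (use sets eq in \<open>auto simp: sets_pair_borel_Ioi dest: sets.sets_into_space\<close>)

lemma nn_integral_indicator_Times:
  assumes "Y \<in> borel_measurable N" "B \<in> sets borel"
  shows "(\<integral>\<^sup>+\<omega>. indicator (a \<times> B) (x, Y \<omega>) \<partial>N) = indicator a x * emeasure N {\<omega> \<in> space N. Y \<omega> \<in> B}"
proof -
  have "(\<integral>\<^sup>+\<omega>. indicator (a \<times> B) (x, Y \<omega>) \<partial>N) = (\<integral>\<^sup>+\<omega>. indicator a x * indicator {\<omega> \<in> space N. Y \<omega> \<in> B} \<omega> \<partial>N)"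
    by (intro nn_integral_cong) (simp add: indicator_def)
  also have "\<dots> = indicator a x * emeasure N {\<omega> \<in> space N. Y \<omega> \<in> B}"
    using measurable_sets[OF assms] by (intro nn_integral_cmult_indicator) (simp add: vimage_def Int_def conj_commute)
  finally show ?thesis .
qed

lemma surv_antimono:
  assumes "finite_measure M" "Y \<in> borel_measurable M" "u \<le> v"
  shows "surv M Y v \<le> surv M Y u"
  unfolding surv_def using assms by (intro finite_measure.finite_measure_mono) auto

lemma borel_measurable_surv:
  assumes "finite_measure M" "Y \<in> borel_measurable M"
  shows "surv M Y \<in> borel_measurable borel"
proof -
  have "mono (\<lambda>u. - surv M Y u)"
    using surv_antimono[OF assms] by (intro monoI) simp
  then have "(\<lambda>u. - (- surv M Y u)) \<in> borel_measurable borel"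
    by (intro borel_measurable_uminus borel_measurable_mono)
  then show ?thesis by simp
qed

lemma emeasure_Ioi_eq_surv:
  assumes "prob_space M"
  shows "emeasure M {\<omega> \<in> space M. u < Y \<omega>} = ennreal (surv M Y u)"
proof -
  interpret prob_space M by fact
  show ?thesis by (simp add: emeasure_eq_measure surv_def)
qed

lemma prob_space_uniform_measure_Ioi:
  assumes "prob_space M" "Y \<in> borel_measurable M" "0 < surv M Y u"
  shows "prob_space (uniform_measure M {\<omega> \<in> space M. u < Y \<omega>})"
  using assms by (intro prob_space_uniform_measure) (auto simp: emeasure_Ioi_eq_surv)

lemma emeasure_uniform_measure_Ioi:
  assumes "prob_space M" "Y \<in> borel_measurable M" "0 < surv M Y u"
  shows "emeasure (uniform_measure M {\<omega> \<in> space M. u < Y \<omega>}) {\<omega> \<in> space M. t < Y \<omega>} =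
    ennreal (surv M Y (max u t) / surv M Y u)"
proof -
  have "{\<omega> \<in> space M. u < Y \<omega>} \<inter> {\<omega> \<in> space M. t < Y \<omega>} = {\<omega> \<in> space M. max u t < Y \<omega>}"
    by auto
  then have "emeasure (uniform_measure M {\<omega> \<in> space M. u < Y \<omega>}) {\<omega> \<in> space M. t < Y \<omega>} =
      emeasure M {\<omega> \<in> space M. max u t < Y \<omega>} / emeasure M {\<omega> \<in> space M. u < Y \<omega>}"
    using assms(2) by (subst emeasure_uniform_measure) auto
  also have "\<dots> = ennreal (surv M Y (max u t)) / ennreal (surv M Y u)"
    by (simp only: emeasure_Ioi_eq_surv[OF assms(1)])
  also have "\<dots> = ennreal (surv M Y (max u t) / surv M Y u)"
    using assms(3) by (simp add: divide_ennreal surv_def)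
  finally show ?thesis .
qed

lemma measure_uniform_measure_residual:
  assumes "prob_space M" "Y \<in> borel_measurable M" "0 < surv M Y t"
  shows "measure (uniform_measure M {\<omega> \<in> space M. t < Y \<omega>}) {\<omega> \<in> space M. s < Y \<omega> - t} =
    measure M {\<omega> \<in> space M. Y \<omega> - t > s \<and> Y \<omega> > t} / measure M {\<omega> \<in> space M. Y \<omega> > t}"
proof -
  have "{\<omega> \<in> space M. t < Y \<omega>} \<inter> {\<omega> \<in> space M. s < Y \<omega> - t} = {\<omega> \<in> space M. Y \<omega> - t > s \<and> Y \<omega> > t}"
    by auto
  with assms show ?thesis
    by (subst measure_uniform_measure) (auto simp: emeasure_Ioi_eq_surv)
qed

lemma relevation_process_measurable:
  "relevation_process M' T Fbar \<Longrightarrow> 1 \<le> i \<Longrightarrow> T i \<in> borel_measurable M'"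
  by (simp add: relevation_process_def)

lemma relevation_process_less_Suc:
  "relevation_process M' T Fbar \<Longrightarrow> \<omega> \<in> space M' \<Longrightarrow> 1 \<le> i \<Longrightarrow> T i \<omega> < T (Suc i) \<omega>"
  by (simp add: relevation_process_def)

lemma relevation_process_pos:
  assumes rel: "relevation_process M' T Fbar" and "\<omega> \<in> space M'" and "1 \<le> i"
  shows "0 < T i \<omega>"
  using \<open>1 \<le> i\<close>
proof (induction i rule: dec_induct)
  case base
  then show ?case using assms by (simp add: relevation_process_def)
next
  case (step i)
  then show ?case using relevation_process_less_Suc[OF rel \<open>\<omega> \<in> space M'\<close>, of i] by simp
qed

lemma measure_relevation_first:
  "relevation_process M' T (\<lambda>n. surv M (Y n)) \<Longrightarrow>
    measure M' {\<omega> \<in> space M'. s < T 1 \<omega>} = measure M {\<omega> \<in> space M. s < Y 1 \<omega>}"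
  by (simp add: relevation_process_def surv_def)

lemma emeasure_relevation_Suc_Ioi:
  assumes "prob_space M" "prob_space M'" and rel: "relevation_process M' T (\<lambda>n. surv M (Y n))"
    and Y: "Y (Suc n) \<in> borel_measurable M" and pos: "\<And>t. 0 \<le> t \<Longrightarrow> 0 < surv M (Y (Suc n)) t"
    and n: "1 \<le> n" and a: "a \<in> sets (Pi_borel n)"
  shows "emeasure M' {\<omega> \<in> space M'. t < T (Suc n) \<omega> \<and> vec n T \<omega> \<in> a} =
    (\<integral>\<^sup>+\<omega>. indicator a (vec n T \<omega>) *
      emeasure (uniform_measure M {\<omega>' \<in> space M. T n \<omega> < Y (Suc n) \<omega>'}) {\<omega>' \<in> space M. t < Y (Suc n) \<omega>'} \<partial>M')"
proof -
  interpret M: prob_space M by fact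
  interpret M': prob_space M' by fact
  let ?F = "surv M (Y (Suc n))"
  define G where "G \<omega> = indicator {\<omega> \<in> space M'. vec n T \<omega> \<in> a} \<omega> *
    (if T n \<omega> \<le> t then ?F t / ?F (T n \<omega>) else 1)" for \<omega>
  have F_pos: "0 < ?F (T n \<omega>)" if "\<omega> \<in> space M'" for \<omega>
    using pos relevation_process_pos[OF rel that n] by simp
  have T: "T i \<in> borel_measurable M'" if "1 \<le> i" for i
    using relevation_process_measurable[OF rel that] .
  have "G \<in> borel_measurable M'"
    using borel_measurable_surv[OF M.finite_measure_axioms Y] measurable_vec[of n T M'] T n a
    unfolding G_def by measurable
  moreover have G_nonneg: "0 \<le> G \<omega>" and "G \<omega> \<le> 1" if "\<omega> \<in> space M'" for \<omega>
    using F_pos[OF that] surv_antimono[OF M.finite_measure_axioms Y, of "T n \<omega>" t]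
    by (auto simp: G_def surv_def indicator_def)
  ultimately have "integrable M' G"
    by (intro M'.integrable_const_bound[where B = 1]) auto
  have "measure M' {\<omega> \<in> space M'. T (Suc n) \<omega> > t \<and> vec n T \<omega> \<in> a} = (\<integral>\<omega>. G \<omega> \<partial>M')"
    using rel[unfolded relevation_process_def, THEN conjunct2, THEN conjunct2, THEN conjunct2,
        rule_format, where i = "Suc n" and t = t and A = a] n a
    unfolding G_def by (simp cong: if_cong)
  then have "emeasure M' {\<omega> \<in> space M'. t < T (Suc n) \<omega> \<and> vec n T \<omega> \<in> a} = (\<integral>\<^sup>+\<omega>. G \<omega> \<partial>M')"
    using \<open>integrable M' G\<close> G_nonneg
    by (simp add: M'.emeasure_eq_measure nn_integral_eq_integral)
  also have "\<dots> = (\<integral>\<^sup>+\<omega>. indicator a (vec n T \<omega>) *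
      emeasure (uniform_measure M {\<omega>' \<in> space M. T n \<omega> < Y (Suc n) \<omega>'}) {\<omega>' \<in> space M. t < Y (Suc n) \<omega>'} \<partial>M')"
  proof (intro nn_integral_cong)
    fix \<omega> assume "\<omega> \<in> space M'"
    moreover from this F_pos have "0 < ?F (T n \<omega>)" by blast
    ultimately show "ennreal (G \<omega>) = indicator a (vec n T \<omega>) *
      emeasure (uniform_measure M {\<omega>' \<in> space M. T n \<omega> < Y (Suc n) \<omega>'}) {\<omega>' \<in> space M. t < Y (Suc n) \<omega>'}"
      by (simp add: emeasure_uniform_measure_Ioi[OF assms(1) Y] G_def indicator_def max_def)
  qed
  finally show ?thesis .
qed

lemma ex_measure_relevation_kernel:
  assumes "prob_space M" "prob_space M'" and rel: "relevation_process M' T (\<lambda>n. surv M (Y n))"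
    and Y: "Y (Suc n) \<in> borel_measurable M" and pos: "\<And>t. 0 \<le> t \<Longrightarrow> 0 < surv M (Y (Suc n)) t"
    and n: "1 \<le> n"
  obtains \<nu> where "sets \<nu> = sets (Pi_borel n \<Otimes>\<^sub>M borel)"
    and "\<And>g. g \<in> borel_measurable (Pi_borel n \<Otimes>\<^sub>M borel) \<Longrightarrow> integral\<^sup>N \<nu> g =
      (\<integral>\<^sup>+\<omega>'. \<integral>\<^sup>+\<omega>. g (vec n T \<omega>', Y (Suc n) \<omega>)
        \<partial>uniform_measure M {\<omega> \<in> space M. T n \<omega>' < Y (Suc n) \<omega>} \<partial>M')"
proof -
  interpret M: prob_space M by fact
  interpret M': prob_space M' by fact
  interpret pair_sigma_finite M' M ..
  let ?F = "surv M (Y (Suc n))"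
  let ?S = "\<lambda>\<omega>'. {\<omega> \<in> space M. T n \<omega>' < Y (Suc n) \<omega>}"
  have vec_T: "vec n T \<in> measurable M' (Pi_borel n)"
    using relevation_process_measurable[OF rel] by (intro measurable_vec) auto
  define \<rho> where "\<rho> z = indicator {z. T n (fst z) < Y (Suc n) (snd z)} z / ennreal (?F (T n (fst z)))"
    for z
  define q where "q z = (vec n T (fst z), Y (Suc n) (snd z))" for z
  have q: "q \<in> measurable (M' \<Otimes>\<^sub>M M) (Pi_borel n \<Otimes>\<^sub>M borel)"
    unfolding q_def using vec_T Y by measurable
  have \<rho>: "\<rho> \<in> borel_measurable (M' \<Otimes>\<^sub>M M)"
    unfolding \<rho>_def using relevation_process_measurable[OF rel n] Y
      borel_measurable_surv[OF M.finite_measure_axioms Y] by measurable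
  show thesis
  proof
    show "sets (distr (density (M' \<Otimes>\<^sub>M M) \<rho>) (Pi_borel n \<Otimes>\<^sub>M borel) q) = sets (Pi_borel n \<Otimes>\<^sub>M borel)"
      by simp
    fix g :: "(nat \<Rightarrow> real) \<times> real \<Rightarrow> ennreal"
    assume g: "g \<in> borel_measurable (Pi_borel n \<Otimes>\<^sub>M borel)"
    have gq: "(\<lambda>z. g (q z)) \<in> borel_measurable (M' \<Otimes>\<^sub>M M)"
      by (rule measurable_compose[OF q g])
    have "integral\<^sup>N (distr (density (M' \<Otimes>\<^sub>M M) \<rho>) (Pi_borel n \<Otimes>\<^sub>M borel) q) g =
        (\<integral>\<^sup>+z. \<rho> z * g (q z) \<partial>(M' \<Otimes>\<^sub>M M))"
      using q g gq \<rho> by (simp add: nn_integral_distr nn_integral_density)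
    also have "\<dots> = (\<integral>\<^sup>+\<omega>'. \<integral>\<^sup>+\<omega>. \<rho> (\<omega>', \<omega>) * g (q (\<omega>', \<omega>)) \<partial>M \<partial>M')"
      using gq \<rho> by (intro M.nn_integral_fst[symmetric]) measurable
    also have "\<dots> = (\<integral>\<^sup>+\<omega>'. \<integral>\<^sup>+\<omega>. g (vec n T \<omega>', Y (Suc n) \<omega>) \<partial>uniform_measure M (?S \<omega>') \<partial>M')"
    proof (intro nn_integral_cong)
      fix \<omega>' assume "\<omega>' \<in> space M'"
      then have "vec n T \<omega>' \<in> space (Pi_borel n)" by (rule measurable_space[OF vec_T])
      then have g': "(\<lambda>\<omega>. g (vec n T \<omega>', Y (Suc n) \<omega>)) \<in> borel_measurable M"
        using g Y by measurable
      have "(\<integral>\<^sup>+\<omega>. \<rho> (\<omega>', \<omega>) * g (q (\<omega>', \<omega>)) \<partial>M) =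
          (\<integral>\<^sup>+\<omega>. g (vec n T \<omega>', Y (Suc n) \<omega>) * indicator (?S \<omega>') \<omega> / emeasure M (?S \<omega>') \<partial>M)"
        by (intro nn_integral_cong)
          (simp add: \<rho>_def q_def emeasure_Ioi_eq_surv[OF assms(1)] indicator_def divide_ennreal_def mult.commute)
      also have "\<dots> = (\<integral>\<^sup>+\<omega>. g (vec n T \<omega>', Y (Suc n) \<omega>) \<partial>uniform_measure M (?S \<omega>'))"
        using g' Y by (simp add: nn_integral_divide nn_integral_uniform_measure)
      finally show "(\<integral>\<^sup>+\<omega>. \<rho> (\<omega>', \<omega>) * g (q (\<omega>', \<omega>)) \<partial>M) =
          (\<integral>\<^sup>+\<omega>. g (vec n T \<omega>', Y (Suc n) \<omega>) \<partial>uniform_measure M (?S \<omega>'))" .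
    qed
    finally show "integral\<^sup>N (distr (density (M' \<Otimes>\<^sub>M M) \<rho>) (Pi_borel n \<Otimes>\<^sub>M borel) q) g =
        (\<integral>\<^sup>+\<omega>'. \<integral>\<^sup>+\<omega>. g (vec n T \<omega>', Y (Suc n) \<omega>) \<partial>uniform_measure M (?S \<omega>') \<partial>M')" .
  qed
qed

lemma nn_integral_relevation_Suc:
  assumes "prob_space M" "prob_space M'" and rel: "relevation_process M' T (\<lambda>n. surv M (Y n))"
    and Y: "Y (Suc n) \<in> borel_measurable M" and pos: "\<And>t. 0 \<le> t \<Longrightarrow> 0 < surv M (Y (Suc n)) t"
    and n: "1 \<le> n" and f: "f \<in> borel_measurable (Pi_borel (Suc n))"
  shows "(\<integral>\<^sup>+\<omega>. f (vec (Suc n) T \<omega>) \<partial>M') = (\<integral>\<^sup>+\<omega>. relevation_kernel M (Y (Suc n)) n f (vec n T \<omega>) \<partial>M')"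
proof -
  interpret M': prob_space M' by fact
  let ?S = "\<lambda>\<omega>'. {\<omega> \<in> space M. T n \<omega>' < Y (Suc n) \<omega>}"
  let ?law = "distr M' (Pi_borel n \<Otimes>\<^sub>M borel) (\<lambda>\<omega>. (vec n T \<omega>, T (Suc n) \<omega>))"
  have "vec n T \<in> measurable M' (Pi_borel n)"
    using relevation_process_measurable[OF rel] by (intro measurable_vec) auto
  moreover have "T (Suc n) \<in> borel_measurable M'"
    using relevation_process_measurable[OF rel] by simp
  ultimately have T: "(\<lambda>\<omega>. (vec n T \<omega>, T (Suc n) \<omega>)) \<in> measurable M' (Pi_borel n \<Otimes>\<^sub>M borel)"
    by measurable
  obtain \<nu> where sets_\<nu>: "sets \<nu> = sets (Pi_borel n \<Otimes>\<^sub>M borel)" and \<nu>: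
    "\<And>g. g \<in> borel_measurable (Pi_borel n \<Otimes>\<^sub>M borel) \<Longrightarrow>
      integral\<^sup>N \<nu> g = (\<integral>\<^sup>+\<omega>'. \<integral>\<^sup>+\<omega>. g (vec n T \<omega>', Y (Suc n) \<omega>) \<partial>uniform_measure M (?S \<omega>') \<partial>M')"
    using ex_measure_relevation_kernel[OF assms(1-6)] by blast
  \<comment> \<open>a relevation process is only specified through the probabilities of rectangles \<open>a \<times> {t<..}\<close>\<close>
  have law: "?law = \<nu>"
  proof (rule measure_eqI_pair_borel_Ioi[OF _ sets_\<nu>])
    show "finite_measure ?law"
      using T by (intro prob_space.finite_measure M'.prob_space_distr) auto
    fix a t assume a: "a \<in> sets (Pi_borel n)"
    have "emeasure ?law (a \<times> {t<..}) = emeasure M' {\<omega> \<in> space M'. t < T (Suc n) \<omega> \<and> vec n T \<omega> \<in> a}"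
      using T a by (subst emeasure_distr) (auto intro!: arg_cong[where f = "emeasure M'"])
    also have "\<dots> = (\<integral>\<^sup>+\<omega>'. indicator a (vec n T \<omega>') *
        emeasure (uniform_measure M (?S \<omega>')) {\<omega> \<in> space M. t < Y (Suc n) \<omega>} \<partial>M')"
      by (rule emeasure_relevation_Suc_Ioi[OF assms(1-5) n a])
    also have "\<dots> = (\<integral>\<^sup>+\<omega>'. \<integral>\<^sup>+\<omega>. indicator (a \<times> {t<..}) (vec n T \<omega>', Y (Suc n) \<omega>)
        \<partial>uniform_measure M (?S \<omega>') \<partial>M')"
      using Y by (simp add: nn_integral_indicator_Times)
    also have "\<dots> = emeasure \<nu> (a \<times> {t<..})"
      using a sets_\<nu> by (simp add: \<nu>[symmetric] nn_integral_indicator)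
    finally show "emeasure ?law (a \<times> {t<..}) = emeasure \<nu> (a \<times> {t<..})" .
  qed simp
  have h: "(\<lambda>z. f (vec_snoc n (fst z) (snd z))) \<in> borel_measurable (Pi_borel n \<Otimes>\<^sub>M borel)"
    using measurable_compose[OF measurable_vec_snoc f] by simp
  have "(\<integral>\<^sup>+\<omega>. f (vec (Suc n) T \<omega>) \<partial>M') = integral\<^sup>N ?law (\<lambda>z. f (vec_snoc n (fst z) (snd z)))"
    using T h by (simp add: nn_integral_distr vec_Suc)
  then show ?thesis
    unfolding law \<nu>[OF h] using n by (simp add: relevation_kernel_def vec_apply)
qed

section \<open>Comparison of the two processes\<close>

lemma kernel_le_if_residual_st_le:
  fixes X Y :: "'a \<Rightarrow> real"
  assumes M: "prob_space M" and X: "X \<in> borel_measurable M" and Y: "Y \<in> borel_measurable M"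
    and x: "x \<in> space (Pi_borel n)" and pos: "0 < surv M Y (x n)"
    and f: "f \<in> borel_measurable (Pi_borel (Suc n))" and mono: "coord_mono (Suc n) f"
  defines "U \<equiv> uniform_measure M {\<omega> \<in> space M. x n < Y \<omega>}"
  shows "st_le U (\<lambda>\<omega>. Y \<omega> - x n) M X \<Longrightarrow> relevation_kernel M Y n f x \<le> replacement_kernel M X n f x"
    and "st_le M X U (\<lambda>\<omega>. Y \<omega> - x n) \<Longrightarrow> replacement_kernel M X n f x \<le> relevation_kernel M Y n f x"
proof -
  define g where "g y = f (vec_snoc n x (x n + y))" for y
  have U: "prob_space U"
    unfolding U_def using M Y pos by (rule prob_space_uniform_measure_Ioi)
  have residual: "(\<lambda>\<omega>. Y \<omega> - x n) \<in> borel_measurable U"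
    unfolding U_def using Y by simp
  have g: "g \<in> borel_measurable borel"
    unfolding g_def using measurable_vec_snoc_right[OF f x] by measurable
  have "mono g"
    using mono_vec_snoc[OF mono x] by (simp add: g_def mono_def)
  have kernels: "relevation_kernel M Y n f x = (\<integral>\<^sup>+\<omega>. g (Y \<omega> - x n) \<partial>U)"
    "replacement_kernel M X n f x = (\<integral>\<^sup>+\<omega>. g (X \<omega>) \<partial>M)"
    by (simp_all add: relevation_kernel_def replacement_kernel_def U_def g_def)
  show "st_le U (\<lambda>\<omega>. Y \<omega> - x n) M X \<Longrightarrow> relevation_kernel M Y n f x \<le> replacement_kernel M X n f x"
    unfolding kernels by (rule nn_integral_mono_st_le[OF U M residual X _ g \<open>mono g\<close>])
  show "st_le M X U (\<lambda>\<omega>. Y \<omega> - x n) \<Longrightarrow> replacement_kernel M X n f x \<le> relevation_kernel M Y n f x"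
    unfolding kernels by (rule nn_integral_mono_st_le[OF M U X residual _ g \<open>mono g\<close>])
qed

context
  fixes M :: "'a measure" and M' :: "'b measure"
    and X Y :: "nat \<Rightarrow> 'a \<Rightarrow> real" and T :: "nat \<Rightarrow> 'b \<Rightarrow> real"
  assumes M: "prob_space M" and M': "prob_space M'"
    and indX: "prob_space.indep_vars M (\<lambda>_. borel) X {1..}"
    and Y: "\<And>n. 1 \<le> n \<Longrightarrow> Y n \<in> borel_measurable M"
    and pos: "\<And>n t. 1 \<le> n \<Longrightarrow> 0 \<le> t \<Longrightarrow> 0 < surv M (Y n) t"
    and rel: "relevation_process M' T (\<lambda>n. surv M (Y n))"
begin

lemma measurable_X: "1 \<le> n \<Longrightarrow> X n \<in> borel_measurable M"
  using indX by (simp add: prob_space.indep_vars_def[OF M])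

lemma measurable_replacement_times: "replacement_times X n \<in> borel_measurable M"
  unfolding replacement_times_def[abs_def] using measurable_X by simp

text \<open>
  Hypothesis (b) only concerns ages \<open>t > 0\<close>, so the two kernels are compared at the relevation
  times, where \<open>T\<^sub>n > 0\<close>.
\<close>

lemma kernel_le_at_relevation_times:
  assumes n: "1 \<le> n" and \<omega>: "\<omega> \<in> space M'"
    and f: "f \<in> borel_measurable (Pi_borel (Suc n))" and mono: "coord_mono (Suc n) f"
  defines "U \<equiv> uniform_measure M {\<omega>' \<in> space M. T n \<omega> < Y (Suc n) \<omega>'}"
  shows "st_le U (\<lambda>\<omega>'. Y (Suc n) \<omega>' - T n \<omega>) M (X (Suc n)) \<Longrightarrow>
      relevation_kernel M (Y (Suc n)) n f (vec n T \<omega>) \<le> replacement_kernel M (X (Suc n)) n f (vec n T \<omega>)"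
    and "st_le M (X (Suc n)) U (\<lambda>\<omega>'. Y (Suc n) \<omega>' - T n \<omega>) \<Longrightarrow>
      replacement_kernel M (X (Suc n)) n f (vec n T \<omega>) \<le> relevation_kernel M (Y (Suc n)) n f (vec n T \<omega>)"
proof -
  have XY: "X (Suc n) \<in> borel_measurable M" "Y (Suc n) \<in> borel_measurable M"
    using measurable_X Y by simp_all
  have "0 < surv M (Y (Suc n)) (vec n T \<omega> n)"
    using pos relevation_process_pos[OF rel \<omega> n] n by (simp add: vec_apply)
  note kernel_le_if_residual_st_le[OF M XY vec_space this f mono]
  then show "st_le U (\<lambda>\<omega>'. Y (Suc n) \<omega>' - T n \<omega>) M (X (Suc n)) \<Longrightarrow>
      relevation_kernel M (Y (Suc n)) n f (vec n T \<omega>) \<le> replacement_kernel M (X (Suc n)) n f (vec n T \<omega>)"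
    and "st_le M (X (Suc n)) U (\<lambda>\<omega>'. Y (Suc n) \<omega>' - T n \<omega>) \<Longrightarrow>
      replacement_kernel M (X (Suc n)) n f (vec n T \<omega>) \<le> relevation_kernel M (Y (Suc n)) n f (vec n T \<omega>)"
    using n by (simp_all add: U_def vec_apply)
qed

lemma nn_integral_relevation_Suc':
  assumes "1 \<le> n" and "f \<in> borel_measurable (Pi_borel (Suc n))"
  shows "(\<integral>\<^sup>+\<omega>. f (vec (Suc n) T \<omega>) \<partial>M') =
    (\<integral>\<^sup>+\<omega>. relevation_kernel M (Y (Suc n)) n f (vec n T \<omega>) \<partial>M')"
  using assms Y[of "Suc n"] pos[of "Suc n"] by (intro nn_integral_relevation_Suc[OF M M' rel]) auto

lemma nn_integral_replacement_kernel_mono: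
  assumes "st_le_vec_nn n A V B W" "1 \<le> n"
    and "f \<in> borel_measurable (Pi_borel (Suc n))" "coord_mono (Suc n) f"
  shows "(\<integral>\<^sup>+\<omega>. replacement_kernel M (X (Suc n)) n f (vec n V \<omega>) \<partial>A) \<le>
    (\<integral>\<^sup>+\<omega>. replacement_kernel M (X (Suc n)) n f (vec n W \<omega>) \<partial>B)"
  using assms M measurable_X[of "Suc n"]
  by (intro st_le_vec_nnD[OF assms(1)] measurable_replacement_kernel coord_mono_replacement_kernel)
    (simp_all add: prob_space_imp_sigma_finite)

lemma st_le_vec_nn_relevation_replacement:
  assumes first: "st_le M' (T 1) M (X 1)"
    and residual: "\<And>n t. 2 \<le> n \<Longrightarrow> 0 < t \<Longrightarrow>
      st_le (uniform_measure M {\<omega> \<in> space M. t < Y n \<omega>}) (\<lambda>\<omega>. Y n \<omega> - t) M (X n)"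
    and "1 \<le> n"
  shows "st_le_vec_nn n M' T M (replacement_times X)"
  using \<open>1 \<le> n\<close>
proof (induction n rule: nat_induct_at_least)
  case base
  show ?case
    using M' M relevation_process_measurable[OF rel] measurable_X first
    by (intro st_le_vec_nn_1) (simp_all add: replacement_times_def)
next
  case (Suc n)
  show ?case
    unfolding st_le_vec_nn_def
  proof (intro allI impI)
    fix f :: "(nat \<Rightarrow> real) \<Rightarrow> ennreal"
    assume f: "f \<in> borel_measurable (Pi_borel (Suc n))" and mono: "coord_mono (Suc n) f"
    have "(\<integral>\<^sup>+\<omega>. f (vec (Suc n) T \<omega>) \<partial>M') \<le>
        (\<integral>\<^sup>+\<omega>. replacement_kernel M (X (Suc n)) n f (vec n T \<omega>) \<partial>M')"
      unfolding nn_integral_relevation_Suc'[OF Suc.hyps f]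
      by (intro nn_integral_mono kernel_le_at_relevation_times(1)[OF Suc.hyps _ f mono] residual
          relevation_process_pos[OF rel _ Suc.hyps]) (use Suc.hyps in auto)
    also have "\<dots> \<le> (\<integral>\<^sup>+\<omega>. replacement_kernel M (X (Suc n)) n f (vec n (replacement_times X) \<omega>) \<partial>M)"
      by (rule nn_integral_replacement_kernel_mono[OF Suc.IH Suc.hyps f mono])
    also have "\<dots> = (\<integral>\<^sup>+\<omega>. f (vec (Suc n) (replacement_times X) \<omega>) \<partial>M)"
      by (rule nn_integral_replacement_times_Suc[OF M indX f Suc.hyps, symmetric])
    finally show "(\<integral>\<^sup>+\<omega>. f (vec (Suc n) T \<omega>) \<partial>M') \<le> (\<integral>\<^sup>+\<omega>. f (vec (Suc n) (replacement_times X) \<omega>) \<partial>M)" .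
  qed
qed

lemma st_le_vec_nn_replacement_relevation:
  assumes first: "st_le M (X 1) M' (T 1)"
    and residual: "\<And>n t. 2 \<le> n \<Longrightarrow> 0 < t \<Longrightarrow>
      st_le M (X n) (uniform_measure M {\<omega> \<in> space M. t < Y n \<omega>}) (\<lambda>\<omega>. Y n \<omega> - t)"
    and "1 \<le> n"
  shows "st_le_vec_nn n M (replacement_times X) M' T"
  using \<open>1 \<le> n\<close>
proof (induction n rule: nat_induct_at_least)
  case base
  show ?case
    using M M' relevation_process_measurable[OF rel] measurable_X first
    by (intro st_le_vec_nn_1) (simp_all add: replacement_times_def)
next
  case (Suc n)
  show ?case
    unfolding st_le_vec_nn_def
  proof (intro allI impI)
    fix f :: "(nat \<Rightarrow> real) \<Rightarrow> ennreal"
    assume f: "f \<in> borel_measurable (Pi_borel (Suc n))" and mono: "coord_mono (Suc n) f"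
    have "(\<integral>\<^sup>+\<omega>. f (vec (Suc n) (replacement_times X) \<omega>) \<partial>M) =
        (\<integral>\<^sup>+\<omega>. replacement_kernel M (X (Suc n)) n f (vec n (replacement_times X) \<omega>) \<partial>M)"
      by (rule nn_integral_replacement_times_Suc[OF M indX f Suc.hyps])
    also have "\<dots> \<le> (\<integral>\<^sup>+\<omega>. replacement_kernel M (X (Suc n)) n f (vec n T \<omega>) \<partial>M')"
      by (rule nn_integral_replacement_kernel_mono[OF Suc.IH Suc.hyps f mono])
    also have "\<dots> \<le> (\<integral>\<^sup>+\<omega>. f (vec (Suc n) T \<omega>) \<partial>M')"
      unfolding nn_integral_relevation_Suc'[OF Suc.hyps f]
      by (intro nn_integral_mono kernel_le_at_relevation_times(2)[OF Suc.hyps _ f mono] residual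
          relevation_process_pos[OF rel _ Suc.hyps]) (use Suc.hyps in auto)
    finally show "(\<integral>\<^sup>+\<omega>. f (vec (Suc n) (replacement_times X) \<omega>) \<partial>M) \<le> (\<integral>\<^sup>+\<omega>. f (vec (Suc n) T \<omega>) \<partial>M')" .
  qed
qed

lemma relevation_le_replacement:
  assumes X_nonneg: "\<And>n \<omega>. 1 \<le> n \<Longrightarrow> \<omega> \<in> space M \<Longrightarrow> 0 \<le> X n \<omega>"
    and first: "st_le M (Y 1) M (X 1)"
    and residual: "\<forall>n\<ge>2. \<forall>t>0. \<forall>s.
      measure M {\<omega>\<in>space M. Y n \<omega> - t > s \<and> Y n \<omega> > t} / measure M {\<omega>\<in>space M. Y n \<omega> > t}
        \<le> measure M {\<omega>\<in>space M. X n \<omega> > s}"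
  shows "(\<forall>n\<ge>1. st_le_vec n M' T M (replacement_times X)) \<and>
    (\<forall>t\<ge>0. st_le M (counting (replacement_times X) t) M' (counting T t))"
proof -
  have nn: "st_le_vec_nn n M' T M (replacement_times X)" if "1 \<le> n" for n
  proof (rule st_le_vec_nn_relevation_replacement[OF _ _ that])
    show "st_le M' (T 1) M (X 1)"
      using first unfolding st_le_def measure_relevation_first[OF rel] .
    show "st_le (uniform_measure M {\<omega> \<in> space M. t < Y n \<omega>}) (\<lambda>\<omega>. Y n \<omega> - t) M (X n)"
      if "2 \<le> n" "0 < t" for n t
      using residual that pos[of n t] Y[of n] by (simp add: st_le_def measure_uniform_measure_residual[OF M])
  qed
  have "st_le M (counting (replacement_times X) t) M' (counting T t)" for t
    using X_nonneg relevation_process_less_Suc[OF rel] relevation_process_measurable[OF rel]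
      measurable_replacement_times nn
    by (intro st_le_counting[OF M M'] st_le_vec_nn_imp_st_le[OF M' M, where n = k for k])
      (auto simp: replacement_times_Suc less_imp_le)
  with nn st_le_vec_nn_imp_st_le_vec[OF M' M] show ?thesis
    by blast
qed

lemma replacement_le_relevation:
  assumes X_nonneg: "\<And>n \<omega>. 1 \<le> n \<Longrightarrow> \<omega> \<in> space M \<Longrightarrow> 0 \<le> X n \<omega>"
    and first: "st_le M (X 1) M (Y 1)"
    and residual: "\<forall>n\<ge>2. \<forall>t>0. \<forall>s. measure M {\<omega>\<in>space M. X n \<omega> > s}
      \<le> measure M {\<omega>\<in>space M. Y n \<omega> - t > s \<and> Y n \<omega> > t} / measure M {\<omega>\<in>space M. Y n \<omega> > t}"
  shows "(\<forall>n\<ge>1. st_le_vec n M (replacement_times X) M' T) \<and>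
    (\<forall>t\<ge>0. st_le M' (counting T t) M (counting (replacement_times X) t))"
proof -
  have nn: "st_le_vec_nn n M (replacement_times X) M' T" if "1 \<le> n" for n
  proof (rule st_le_vec_nn_replacement_relevation[OF _ _ that])
    show "st_le M (X 1) M' (T 1)"
      using first unfolding st_le_def measure_relevation_first[OF rel] .
    show "st_le M (X n) (uniform_measure M {\<omega> \<in> space M. t < Y n \<omega>}) (\<lambda>\<omega>. Y n \<omega> - t)"
      if "2 \<le> n" "0 < t" for n t
      using residual that pos[of n t] Y[of n] by (simp add: st_le_def measure_uniform_measure_residual[OF M])
  qed
  have "st_le M' (counting T t) M (counting (replacement_times X) t)" for t
    using X_nonneg relevation_process_less_Suc[OF rel] relevation_process_measurable[OF rel]
      measurable_replacement_times nn
    by (intro st_le_counting[OF M' M] st_le_vec_nn_imp_st_le[OF M M', where n = k for k])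
      (auto simp: replacement_times_Suc less_imp_le)
  with nn st_le_vec_nn_imp_st_le_vec[OF M M'] show ?thesis
    by blast
qed

end

theorem theorem3p4:
  fixes M :: "'a measure" and M' :: "'b measure"
    and X Y :: "nat \<Rightarrow> 'a \<Rightarrow> real" and T :: "nat \<Rightarrow> 'b \<Rightarrow> real"
  assumes "prob_space M" and "prob_space M'"
    and "prob_space.indep_vars M (\<lambda>_. borel) X {1::nat..}"
    and "prob_space.indep_vars M (\<lambda>_. borel) Y {1::nat..}"
    and "\<forall>n\<ge>1. \<forall>\<omega>\<in>space M. 0 \<le> X n \<omega> \<and> 0 \<le> Y n \<omega>"
    and "\<forall>n\<ge>1. continuous_rv M (X n) \<and> continuous_rv M (Y n)"
    and "\<forall>n\<ge>1. \<forall>t\<ge>0. surv M (Y n) t > 0"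
    and "relevation_process M' T (\<lambda>n. surv M (Y n))"
  shows
    "(st_le M (Y 1) M (X 1) \<and>
      (\<forall>n\<ge>2. \<forall>t>0. \<forall>s.
         measure M {\<omega>\<in>space M. Y n \<omega> - t > s \<and> Y n \<omega> > t} / measure M {\<omega>\<in>space M. Y n \<omega> > t}
           \<le> measure M {\<omega>\<in>space M. X n \<omega> > s})
      \<longrightarrow> (\<forall>n\<ge>1. st_le_vec n M' T M (replacement_times X)) \<and>
          (\<forall>t\<ge>0. st_le M (counting (replacement_times X) t) M' (counting T t)))
     \<and>
     (st_le M (X 1) M (Y 1) \<and>
      (\<forall>n\<ge>2. \<forall>t>0. \<forall>s.
         measure M {\<omega>\<in>space M. X n \<omega> > s}
           \<le> measure M {\<omega>\<in>space M. Y n \<omega> - t > s \<and> Y n \<omega> > t} / measure M {\<omega>\<in>space M. Y n \<omega> > t})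
      \<longrightarrow> (\<forall>n\<ge>1. st_le_vec n M (replacement_times X) M' T) \<and>
          (\<forall>t\<ge>0. st_le M' (counting T t) M (counting (replacement_times X) t)))"
proof -
  have Y: "\<And>n. 1 \<le> n \<Longrightarrow> Y n \<in> borel_measurable M"
    using assms(4) by (simp add: prob_space.indep_vars_def[OF assms(1)])
  note processes = assms(1-3) Y assms(7)[rule_format] assms(8)
  have X_nonneg: "\<And>n \<omega>. 1 \<le> n \<Longrightarrow> \<omega> \<in> space M \<Longrightarrow> 0 \<le> X n \<omega>"
    using assms(5) by simp
  show ?thesis
    using relevation_le_replacement[OF processes X_nonneg] replacement_le_relevation[OF processes X_nonneg]
    by blast
qed

end
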